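(* Let $X$ be a metric space with an $(n-1)$-dimensional control function $D_X^{n-1}:\mathbb{R}_+\to\mathbb{R}_+\cup\{\infty\}$, where $n\ge1$. Let $r>0$ and let $f:\{0,1,\ldots,k\}^n\to X$ be an $r$-cube. Then there exist an index $i$ and two points $a,b\in\{0,1,\ldots,k\}^n$ whose $i$-th coordinates differ by $k$ such that $\mathrm{dist}(f(a),f(b))\le D_X^{n-1}(n\cdot r)$.
   Context: An $r$-cube in a metric space $X$ is a function $f:\{0,1,\ldots,k\}^n\to X$ such that $\mathrm{dist}(f(x),f(x+e_i))<r$ whenever $x,x+e_i\in\{0,\ldots,k\}^n$, $e_i$ the standard basis vectors of $\mathbb{R}^n$. For $Y\subseteq X$, $r$-components of $Y$ are the equivalence classes of points joined by sequences in $Y$ with consecutive distances $<r$. An $m$-dimensional control function of $X$ is $D:\mathbb{R}_+\to\mathbb{R}_+\cup\{\infty\}$ such that for each $r>0$ there is a cover $\{X_0,\dots,X_m\}$ of $X$ such that every open ball $B(x,r)$ lies in some $X_i$ and every $r$-component of each $X_i$ has diameter at most $D(r)$. *)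

theory Defs
  imports "HOL-Analysis.Analysis"
begin

definition grid :: "nat \<Rightarrow> nat \<Rightarrow> (nat \<Rightarrow> nat) set" where
  "grid k n = {x. (\<forall>i<n. x i \<le> k) \<and> (\<forall>i\<ge>n. x i = 0)}"

definition r_cube :: "real \<Rightarrow> nat \<Rightarrow> nat \<Rightarrow> ((nat \<Rightarrow> nat) \<Rightarrow> 'a::metric_space) \<Rightarrow> bool" where
  "r_cube r k n f \<longleftrightarrow>
     (\<forall>x i. x \<in> grid k n \<and> i < n \<and> x i + 1 \<le> k \<longrightarrow> dist (f x) (f (x(i := x i + 1))) < r)"

definition r_chain :: "real \<Rightarrow> 'a::metric_space set \<Rightarrow> 'a \<Rightarrow> 'a \<Rightarrow> bool" where
  "r_chain r Y = (\<lambda>u v. u \<in> Y \<and> v \<in> Y \<and> dist u v < r)\<^sup>*\<^sup>*"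

definition r_components :: "real \<Rightarrow> 'a::metric_space set \<Rightarrow> 'a set set" where
  "r_components r Y = {{y \<in> Y. r_chain r Y x y} | x. x \<in> Y}"

definition ediam :: "'a::metric_space set \<Rightarrow> ereal" where
  "ediam C = (SUP x\<in>C. SUP y\<in>C. ereal (dist x y))"

text \<open>m-dimensional control function of the metric space (the whole type 'a).\<close>
definition control_function :: "nat \<Rightarrow> (real \<Rightarrow> ereal) \<Rightarrow> 'a::metric_space itself \<Rightarrow> bool" where
  "control_function m D _ \<longleftrightarrow>
     (\<forall>r>0. D r \<ge> 0) \<and>
     (\<forall>r>0. \<exists>U :: nat \<Rightarrow> 'a set.
         (\<Union>i\<le>m. U i) = UNIV \<and>
         (\<forall>x. \<exists>i\<le>m. ball x r \<subseteq> U i) \<and>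
         (\<forall>i\<le>m. \<forall>C \<in> r_components r (U i). ediam C \<le> D r))"

end

(*
  Colour every grid point x by an index i < n with f x in the i-th set of the cover for scale
  n * r. Two grid points differing by at most one in each coordinate are joined by n cube edges,
  so their images are less than n * r apart. A discrete hex theorem, derived from Kuhn's
  combinatorial lemma, yields a colour i and a monochromatic path of such king moves from the
  face x_i = 0 to the face x_i = k. Its image is an (n * r)-chain in the i-th cover set, so the
  images of its ends lie in one (n * r)-component, whose diameter is at most D (n * r).
*)

theory Submission
  imports Defs
begin

definition king_adjacent :: "nat \<Rightarrow> (nat \<Rightarrow> nat) \<Rightarrow> (nat \<Rightarrow> nat) \<Rightarrow> bool" where
  "king_adjacent n x y \<longleftrightarrow> (\<forall>t<n. x t \<le> y t + 1 \<and> y t \<le> x t + 1)"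

lemma king_adjacent_sym: "king_adjacent n x y \<longleftrightarrow> king_adjacent n y x"
  unfolding king_adjacent_def by blast

text \<open>A discrete KKM lemma: the labelling \<open>x \<mapsto> [x \<notin> Z j]\<close> admits a fully labelled Kuhn
  simplex.\<close>

lemma kuhn_simplex_straddling:
  fixes Z :: "nat \<Rightarrow> (nat \<Rightarrow> nat) set"
  assumes "0 < p"
    and zero_face: "\<And>x j. \<forall>j. x j \<le> p \<Longrightarrow> j < n \<Longrightarrow> x j = 0 \<Longrightarrow> x \<in> Z j"
    and p_face: "\<And>x j. \<forall>j. x j \<le> p \<Longrightarrow> j < n \<Longrightarrow> x j = p \<Longrightarrow> x \<notin> Z j"
  obtains s where "\<And>v w. v \<in> s \<Longrightarrow> w \<in> s \<Longrightarrow> king_adjacent n v w"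
    and "\<exists>w\<in>s. \<forall>j<n. w \<in> Z j"
    and "\<And>j. j < n \<Longrightarrow> \<exists>v\<in>s. v \<notin> Z j"
proof -
  define lab where "lab x j = (if x \<in> Z j then 0 else 1 :: nat)" for x j
  have "odd (card {s. ksimplex p n s \<and> (reduced n \<circ> lab) ` s = {..n}})"
    by (rule kuhn_combinatorial) (auto simp: lab_def assms)
  then have "{s. ksimplex p n s \<and> (reduced n \<circ> lab) ` s = {..n}} \<noteq> {}"
    by (rule odd_card_imp_not_empty)
  then obtain s b u where simplex: "kuhn_simplex p n b u s"
    and fully_labelled: "(reduced n \<circ> lab) ` s = {..n}"
    by (auto elim: ksimplex.cases)
  show thesis
  proof
    show "king_adjacent n v w" if "v \<in> s" "w \<in> s" for v w
    proof -
      have "v t \<le> w t + 1 \<and> w t \<le> v t + 1" for t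
        using kuhn_simplex.base_le[OF simplex, of v t] kuhn_simplex.le_Suc_base[OF simplex, of v t]
          kuhn_simplex.base_le[OF simplex, of w t] kuhn_simplex.le_Suc_base[OF simplex, of w t] that
        by linarith
      then show ?thesis
        unfolding king_adjacent_def by blast
    qed
    obtain w where "w \<in> s" "reduced n (lab w) = n"
      using fully_labelled by (metis atMost_iff comp_apply imageE order_refl)
    then show "\<exists>w\<in>s. \<forall>j<n. w \<in> Z j"
      using reduced_labelling(2)[of n "lab w"] by (auto simp: lab_def split: if_splits)
    show "\<exists>v\<in>s. v \<notin> Z j" if "j < n" for j
    proof -
      obtain v where "v \<in> s" "reduced n (lab v) = j"
        using fully_labelled \<open>j < n\<close> by (metis atMost_iff comp_apply imageE less_imp_le)
      then show ?thesis
        using reduced_labelling(3)[of n "lab v"] \<open>j < n\<close> by (auto simp: lab_def split: if_splits)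
    qed
  qed
qed

lemma colour_region_reaches_far_face:
  fixes col :: "(nat \<Rightarrow> nat) \<Rightarrow> nat" and A :: "nat \<Rightarrow> (nat \<Rightarrow> nat) set"
  assumes col_lt: "\<And>x. col x < n"
    and A_grid: "\<And>i. A i \<subseteq> grid k n"
    and A_face: "\<And>i y. y \<in> grid k n \<Longrightarrow> y i = 0 \<Longrightarrow> col y = i \<Longrightarrow> y \<in> A i"
    and A_step: "\<And>i x y. x \<in> A i \<Longrightarrow> y \<in> grid k n \<Longrightarrow> col y = i \<Longrightarrow> king_adjacent n x y
      \<Longrightarrow> y \<in> A i"
  shows "\<exists>i<n. \<exists>b\<in>A i. b i = k"
proof (rule ccontr)
  assume "\<not> ?thesis"
  moreover have "b i \<le> k" if "b \<in> A i" "i < n" for b i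
    using that A_grid unfolding grid_def by blast
  ultimately have A_lt: "b i < k" if "b \<in> A i" "i < n" for b i
    using that by fastforce
  \<comment> \<open>A point of all \<open>Z j\<close> lies in the region of its own colour \<open>c\<close>, so no neighbour can
    leave \<open>Z c\<close>; Kuhn's lemma produces such a neighbour.\<close>
  define Z where "Z j = {x. x j = 0 \<or> (\<exists>a\<in>A j. king_adjacent n x a)}" for j
  have Z_le: "x j \<le> k" if "x \<in> Z j" "j < n" for x j
  proof (cases "x j = 0")
    case False
    then obtain a where "a \<in> A j" "king_adjacent n x a"
      using \<open>x \<in> Z j\<close> unfolding Z_def by auto
    then show ?thesis
      using A_lt[of a j] \<open>j < n\<close> unfolding king_adjacent_def by fastforce
  qed simp
  have zero_face: "x \<in> Z j" if "x j = 0" for x j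
    using that unfolding Z_def by blast
  have far_face: "x \<notin> Z j" if "j < n" "x j = Suc k" for x j
    using Z_le[of x j] that by auto
  obtain s where adjacent: "\<And>v w. v \<in> s \<Longrightarrow> w \<in> s \<Longrightarrow> king_adjacent n v w"
    and "\<exists>w\<in>s. \<forall>j<n. w \<in> Z j" and some_out: "\<And>j. j < n \<Longrightarrow> \<exists>v\<in>s. v \<notin> Z j"
    by (rule kuhn_simplex_straddling[of "Suc k" n Z]) (auto simp: zero_face far_face)
  then obtain w where "w \<in> s" and w_in: "\<forall>j<n. w \<in> Z j"
    by blast
  \<comment> \<open>Points of a Kuhn simplex have all coordinates beyond \<open>n\<close> equal to \<open>Suc k\<close>;
    cut them to \<open>0\<close>.\<close>
  define w' where "w' j = (if j < n then w j else 0)" for j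
  have w'_grid: "w' \<in> grid k n"
    using w_in Z_le unfolding w'_def grid_def by auto
  have adjacent_w': "king_adjacent n x w' \<longleftrightarrow> king_adjacent n x w" for x
    unfolding king_adjacent_def w'_def by simp
  define c where "c = col w'"
  have "c < n"
    unfolding c_def by (rule col_lt)
  have "w' \<in> A c"
  proof -
    have "w c = 0 \<or> (\<exists>a\<in>A c. king_adjacent n a w)"
      using w_in \<open>c < n\<close> king_adjacent_sym unfolding Z_def by blast
    then show ?thesis
      using A_face A_step w'_grid adjacent_w' \<open>c < n\<close> unfolding c_def w'_def by auto
  qed
  moreover obtain v where "v \<in> s" "v \<notin> Z c"
    using some_out \<open>c < n\<close> by blast
  ultimately show False
    using adjacent[OF \<open>v \<in> s\<close> \<open>w \<in> s\<close>] adjacent_w' unfolding Z_def by blast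
qed

definition monochrome_step ::
    "((nat \<Rightarrow> nat) \<Rightarrow> nat) \<Rightarrow> nat \<Rightarrow> nat \<Rightarrow> nat \<Rightarrow> (nat \<Rightarrow> nat) \<Rightarrow> (nat \<Rightarrow> nat) \<Rightarrow> bool" where
  "monochrome_step col k n i x y \<longleftrightarrow>
     x \<in> grid k n \<and> y \<in> grid k n \<and> col x = i \<and> col y = i \<and> king_adjacent n x y"

lemma monochrome_crossing:
  fixes col :: "(nat \<Rightarrow> nat) \<Rightarrow> nat"
  assumes col_lt: "\<And>x. col x < n"
  obtains i a b where "i < n" "a \<in> grid k n" "b \<in> grid k n" "a i = 0" "b i = k" "col a = i"
    and "(monochrome_step col k n i)\<^sup>*\<^sup>* a b"
proof -
  define reach where "reach i = {b \<in> grid k n. col b = i \<and>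
      (\<exists>a\<in>grid k n. a i = 0 \<and> col a = i \<and> (monochrome_step col k n i)\<^sup>*\<^sup>* a b)}" for i
  have "\<exists>i<n. \<exists>b\<in>reach i. b i = k"
  proof (rule colour_region_reaches_far_face[OF col_lt])
    show "reach i \<subseteq> grid k n" for i
      unfolding reach_def by blast
    show "y \<in> reach i" if "y \<in> grid k n" "y i = 0" "col y = i" for y i
      using that unfolding reach_def by blast
    show "y \<in> reach i"
      if "x \<in> reach i" "y \<in> grid k n" "col y = i" "king_adjacent n x y" for x y i
    proof -
      have edge: "monochrome_step col k n i x y"
        using that unfolding reach_def monochrome_step_def by blast
      obtain a where "a \<in> grid k n" "a i = 0" "col a = i"
        and "(monochrome_step col k n i)\<^sup>*\<^sup>* a x"
        using \<open>x \<in> reach i\<close> unfolding reach_def by blast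
      with edge show ?thesis
        using that unfolding reach_def by (blast intro: rtranclp.rtrancl_into_rtrancl)
    qed
  qed
  then show thesis
    using that unfolding reach_def by blast
qed

lemma r_cubeD:
  "r_cube r k n f \<Longrightarrow> x \<in> grid k n \<Longrightarrow> i < n \<Longrightarrow> x i + 1 \<le> k
    \<Longrightarrow> dist (f x) (f (x(i := x i + 1))) < r"
  unfolding r_cube_def by blast

lemma r_cube_dist_update:
  fixes f :: "(nat \<Rightarrow> nat) \<Rightarrow> 'a::metric_space"
  assumes cube: "r_cube r k n f" and "r > 0" and x: "x \<in> grid k n"
    and "m < n" "t \<le> k" "x m \<le> t + 1" "t \<le> x m + 1"
  shows "dist (f x) (f (x(m := t))) < r"
proof -
  consider "t = x m" | "t = x m + 1" | "x m = t + 1"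
    using assms by linarith
  then show ?thesis
  proof cases
    case 1
    then show ?thesis
      using \<open>r > 0\<close> by simp
  next
    case 2
    then show ?thesis
      using r_cubeD[OF cube x \<open>m < n\<close>] \<open>t \<le> k\<close> by simp
  next
    case 3
    have "x(m := t) \<in> grid k n" "t + 1 \<le> k"
      using 3 x \<open>m < n\<close> \<open>t \<le> k\<close> unfolding grid_def by auto
    moreover have "(x(m := t))(m := t + 1) = x"
      using 3 by auto
    ultimately have "dist (f (x(m := t))) (f x) < r"
      using r_cubeD[OF cube _ \<open>m < n\<close>, of "x(m := t)"] by simp
    then show ?thesis
      by (simp add: dist_commute)
  qed
qed

lemma r_cube_dist_king_adjacent:
  fixes f :: "(nat \<Rightarrow> nat) \<Rightarrow> 'a::metric_space"
  assumes cube: "r_cube r k n f" and "r > 0" "n \<ge> 1"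
    and x: "x \<in> grid k n" and y: "y \<in> grid k n" and "king_adjacent n x y"
  shows "dist (f x) (f y) < real n * r"
proof -
  define z where "z m j = (if j < m then y j else x j)" for m j
  have z_grid: "z m \<in> grid k n" for m
    using x y unfolding grid_def z_def by auto
  have z_step: "dist (f (z m)) (f (z (Suc m))) < r" if "m < n" for m
  proof -
    have "z (Suc m) = (z m)(m := y m)"
      by (auto simp: z_def)
    moreover have "z m m = x m" "y m \<le> k"
      using y that unfolding z_def grid_def by auto
    ultimately show ?thesis
      using r_cube_dist_update[OF cube \<open>r > 0\<close> z_grid that] \<open>king_adjacent n x y\<close> that
      unfolding king_adjacent_def by simp
  qed
  have "dist (f x) (f (z m)) \<le> (\<Sum>j<m. dist (f (z j)) (f (z (Suc j))))" for m
  proof (induction m)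
    case 0
    then show ?case
      by (simp add: z_def)
  next
    case (Suc m)
    then show ?case
      using dist_triangle[of "f x" "f (z (Suc m))" "f (z m)"] by simp
  qed
  also have "(\<Sum>j<n. dist (f (z j)) (f (z (Suc j)))) < (\<Sum>j<n. r)"
    using z_step \<open>n \<ge> 1\<close> by (intro sum_strict_mono) (auto simp: lessThan_empty_iff)
  also have "z n = y"
    using x y unfolding z_def grid_def by auto
  finally show ?thesis
    by simp
qed

lemma r_cube_monochrome_path:
  fixes f :: "(nat \<Rightarrow> nat) \<Rightarrow> 'a::metric_space"
  assumes cube: "r_cube r k n f" and "r > 0" "n \<ge> 1"
    and in_U: "\<And>x. f x \<in> U (col x)"
    and path: "(monochrome_step col k n i)\<^sup>*\<^sup>* a b"
  shows "r_chain (real n * r) (U i) (f a) (f b)"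
  using path
proof (induction rule: rtranclp_induct)
  case base
  then show ?case
    by (simp add: r_chain_def)
next
  case (step y z)
  then have "y \<in> grid k n" "z \<in> grid k n" "col y = i" "col z = i" "king_adjacent n y z"
    unfolding monochrome_step_def by auto
  then have "f y \<in> U i" "f z \<in> U i" "dist (f y) (f z) < real n * r"
    using in_U r_cube_dist_king_adjacent[OF cube \<open>r > 0\<close> \<open>n \<ge> 1\<close>] by metis+
  with step.IH show ?case
    unfolding r_chain_def by (simp add: rtranclp.rtrancl_into_rtrancl)
qed

lemma dist_le_ediam:
  assumes "x \<in> C" "y \<in> C"
  shows "ereal (dist x y) \<le> ediam C"
  unfolding ediam_def by (intro SUP_upper2[OF assms(1)] SUP_upper assms(2))

lemma r_chain_closed: "r_chain r Y u v \<Longrightarrow> u \<in> Y \<Longrightarrow> v \<in> Y"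
  unfolding r_chain_def by (induction rule: rtranclp_induct) auto

lemma r_chain_dist_le:
  assumes small: "\<And>C. C \<in> r_components r Y \<Longrightarrow> ediam C \<le> d"
    and "u \<in> Y" and chain: "r_chain r Y u v"
  shows "ereal (dist u v) \<le> d"
proof -
  define C where "C = {y \<in> Y. r_chain r Y u y}"
  have "u \<in> C" "v \<in> C"
    using \<open>u \<in> Y\<close> chain r_chain_closed unfolding C_def r_chain_def by auto
  then have "ereal (dist u v) \<le> ediam C"
    by (rule dist_le_ediam)
  also have "ediam C \<le> d"
    using small \<open>u \<in> Y\<close> unfolding r_components_def C_def by blast
  finally show ?thesis .
qed

lemma control_function_colouring:
  fixes D :: "real \<Rightarrow> ereal"
  assumes "control_function m D TYPE('a)" and "R > 0"
  obtains colour :: "'a::metric_space \<Rightarrow> nat" and U :: "nat \<Rightarrow> 'a set"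
  where "\<And>y. colour y \<le> m" and "\<And>y. y \<in> U (colour y)"
    and "\<And>i C. i \<le> m \<Longrightarrow> C \<in> r_components R (U i) \<Longrightarrow> ediam C \<le> D R"
proof -
  obtain U :: "nat \<Rightarrow> 'a set" where cover: "(\<Union>i\<le>m. U i) = UNIV"
    and small: "\<forall>i\<le>m. \<forall>C\<in>r_components R (U i). ediam C \<le> D R"
    using assms unfolding control_function_def by metis
  have "\<forall>y. \<exists>i. i \<le> m \<and> y \<in> U i"
    using cover by blast
  then obtain colour where "\<And>y. colour y \<le> m" "\<And>y. y \<in> U (colour y)"
    by (metis choice)
  then show thesis
    using small by (intro that[where colour = colour and U = U]) auto
qed

theorem corollary2p3:
  fixes D :: "real \<Rightarrow> ereal" and f :: "(nat \<Rightarrow> nat) \<Rightarrow> 'a::metric_space"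
    and n k :: nat and r :: real
  assumes "n \<ge> 1"
    and "control_function (n - 1) D TYPE('a)"
    and "r > 0"
    and "r_cube r k n f"
  shows "\<exists>i<n. \<exists>a\<in>grid k n. \<exists>b\<in>grid k n.
           a i = 0 \<and> b i = k \<and> ereal (dist (f a) (f b)) \<le> D (real n * r)"
proof -
  have "real n * r > 0"
    using assms(1,3) by simp
  then obtain colour :: "'a \<Rightarrow> nat" and U
    where colour_le: "\<And>y. colour y \<le> n - 1" and in_U: "\<And>y. y \<in> U (colour y)"
    and small: "\<And>i C. i \<le> n - 1 \<Longrightarrow> C \<in> r_components (real n * r) (U i)
      \<Longrightarrow> ediam C \<le> D (real n * r)"
    by (rule control_function_colouring[OF assms(2)]) blast
  define col where "col x = colour (f x)" for x
  have col_lt: "col x < n" for x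
    using colour_le[of "f x"] \<open>n \<ge> 1\<close> unfolding col_def by linarith
  obtain i a b where "i < n" "a \<in> grid k n" "b \<in> grid k n" "a i = 0" "b i = k" "col a = i"
    and path: "(monochrome_step col k n i)\<^sup>*\<^sup>* a b"
    by (rule monochrome_crossing[OF col_lt])
  have chain: "r_chain (real n * r) (U i) (f a) (f b)"
    using r_cube_monochrome_path[OF assms(4,3,1) _ path] in_U unfolding col_def by blast
  have "f a \<in> U i"
    using in_U \<open>col a = i\<close> unfolding col_def by blast
  have "i \<le> n - 1"
    using \<open>i < n\<close> by simp
  have "ereal (dist (f a) (f b)) \<le> D (real n * r)"
    by (rule r_chain_dist_le[OF small[OF \<open>i \<le> n - 1\<close>] \<open>f a \<in> U i\<close> chain])
  then show ?thesis
    using \<open>i < n\<close> \<open>a \<in> grid k n\<close> \<open>b \<in> grid k n\<close> \<open>a i = 0\<close> \<open>b i = k\<close> by blast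
qed

end
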